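(* Let $p\ge K\ge 2$ and $n\ge K$. Let $A=[A_1,\dots,A_K]\in\mathbb{R}^{p\times K}$ have nonnegative entries with each column summing to $1$, and let $W\in\mathbb{R}^{K\times n}$ have nonnegative entries with each column summing to $1$. Set $D_0=AW$ and assume $\mathrm{rank}(D_0)=K$, with the $K$ nonzero singular values of $D_0$ distinct. Let $a_i^T$ denote the $i$-th row of $A$ and assume every $a_i\neq 0$. Let $\xi_1,\dots,\xi_K$ be the left singular vectors of $D_0$ associated with its $K$ nonzero singular values, in decreasing order of the singular values, and let $\Xi=[\xi_1,\dots,\xi_K]$. Let $V=[V_1,\dots,V_K]\in\mathbb{R}^{K\times K}$ be the matrix with $\Xi=AV$. Assume that all entries of $\xi_1$ and of $V_1$ are positive. Define $R\in\mathbb{R}^{p\times(K-1)}$ by $R(i,k)=\xi_{k+1}(i)/\xi_1(i)$ and $V^*\in\mathbb{R}^{K\times(K-1)}$ by $V^*(j,k)=V_{k+1}(j)/V_1(j)$, for $1\le i\le p$, $1\le j\le K$, $1\le k\le K-1$. Let $r_1,\dots,r_p\in\mathbb{R}^{K-1}$ be the rows of $R$, let $v_1^*,\dots,v_K^*\in\mathbb{R}^{K-1}$ be the rows of $V^*$, and let $\Pi=[\mathrm{diag}(\xi_1)]^{-1}A\,\mathrm{diag}(V_1)\in\mathbb{R}^{p\times K}$ with rows $\pi_1,\dots,\pi_p$. Then: (i) $v_1^*,\dots,v_K^*$ are affinely independent, so they are the vertices of a non-degenerate simplex $\mathcal{S}_K^*\subset\mathbb{R}^{K-1}$; (ii) for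 every $1\le i\le p$, $\pi_i$ is a weight vector (nonnegative entries summing to $1$), with $\pi_i(j)>0$ if and only if $a_i(j)>0$, and $r_i=\sum_{j=1}^K\pi_i(j)v_j^*$; in particular, $r_i$ lies in $\mathcal{S}_K^*$, in the relative interior of the face of $\mathcal{S}_K^*$ spanned by $\{v_j^*: a_i(j)>0\}$; (iii) for every $1\le i\le p$ and $1\le k\le K$, $r_i=v_k^*$ if and only if word $i$ is an anchor word of topic $k$, i.e. $a_i(j)=0$ for all $j\ne k$.
   Context: This is the noiseless topic model (pLSI): column $k$ of $A$ is the word distribution of topic $k$ over a vocabulary of $p$ words, and column $j$ of $W$ is the topic mixing proportion of document $j$. Word $i$ is called an anchor word of topic $k$ if $A(i,k)\ne 0$ and $A(i,\ell)=0$ for all $\ell\ne k$. A weight vector is a vector with nonnegative entries summing to $1$. Since $\mathrm{rank}(D_0)=K$, the column span of $\Xi$ equals that of $A$, so the $K\times K$ matrix $V$ with $\Xi=AV$ exists, is unique and is nonsingular. *)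

theory Defs
  imports "Jordan_Normal_Form.DL_Rank_Submatrix"
begin

(* Matrices are Jordan_Normal_Form matrices; all indices are 0-based.
   Topic 1 / singular vector 1 of the paper corresponds to index 0. *)

definition weight_vector :: "real vec \<Rightarrow> bool" where
  "weight_vector w \<longleftrightarrow> (\<forall>j<dim_vec w. w $ j \<ge> 0) \<and> (\<Sum>j<dim_vec w. w $ j) = 1"

definition singular_pair :: "real mat \<Rightarrow> real \<Rightarrow> real vec \<Rightarrow> real vec \<Rightarrow> bool" where
  "singular_pair D s u w \<longleftrightarrow>
     u \<in> carrier_vec (dim_row D) \<and> w \<in> carrier_vec (dim_col D) \<and>
     u \<bullet> u = 1 \<and> w \<bullet> w = 1 \<and> D *\<^sub>v w = s \<cdot>\<^sub>v u \<and> transpose_mat D *\<^sub>v u = s \<cdot>\<^sub>v w"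

definition affinely_independent :: "nat \<Rightarrow> nat \<Rightarrow> (nat \<Rightarrow> real vec) \<Rightarrow> bool" where
  "affinely_independent d m v \<longleftrightarrow>
     (\<forall>c::nat \<Rightarrow> real. (\<Sum>j<m. c j) = 0 \<and> (\<forall>k<d. (\<Sum>j<m. c j * v j $ k) = 0)
        \<longrightarrow> (\<forall>j<m. c j = 0))"

definition anchor_word :: "real mat \<Rightarrow> nat \<Rightarrow> nat \<Rightarrow> bool" where
  "anchor_word A i k \<longleftrightarrow> A $$ (i, k) \<noteq> 0 \<and> (\<forall>l<dim_col A. l \<noteq> k \<longrightarrow> A $$ (i, l) = 0)"

end

theory Submission
  imports Defs
begin

text \<open>Since the left singular vectors for distinct positive singular values are orthonormal,
  \<open>\<Xi>\<^sup>T\<Xi> = I\<close>, so \<open>\<Xi>\<^sup>T A\<close> is an inverse of \<open>V\<close> and the rows of \<open>V\<close> are linearly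
  independent. Dividing row \<open>j\<close> of \<open>V\<close> by \<open>V(j,1) > 0\<close> turns this into affine independence
  of the points \<open>v\<^sub>j\<^sup>*\<close>. Dividing row \<open>i\<close> of \<open>\<Xi> = AV\<close> by \<open>\<xi>\<^sub>1(i) = \<Sum>\<^sub>j A(i,j) V(j,1)\<close> exhibits
  \<open>r\<^sub>i\<close> as the convex combination of the \<open>v\<^sub>j\<^sup>*\<close> with weights \<open>\<pi>\<^sub>i\<close>, and by affine independence
  \<open>r\<^sub>i = v\<^sub>k\<^sup>*\<close> exactly when \<open>\<pi>\<^sub>i\<close> is the \<open>k\<close>-th unit vector, i.e. when word \<open>i\<close> is an
  anchor word of topic \<open>k\<close>.\<close>

lemma singular_pair_orthogonal:
  fixes D :: "real mat"
  assumes a: "singular_pair D s1 u1 w1" and b: "singular_pair D s2 u2 w2"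
    and s1: "s1 > 0" and s2: "s2 > 0" and ne: "s1 \<noteq> s2"
  shows "u1 \<bullet> u2 = 0"
proof -
  have D: "D \<in> carrier_mat (dim_row D) (dim_col D)" by auto
  have Dt: "transpose_mat D \<in> carrier_mat (dim_col D) (dim_row D)" by auto
  have u1: "u1 \<in> carrier_vec (dim_row D)" and w1: "w1 \<in> carrier_vec (dim_col D)"
    and u2: "u2 \<in> carrier_vec (dim_row D)" and w2: "w2 \<in> carrier_vec (dim_col D)"
    and Dw1: "D *\<^sub>v w1 = s1 \<cdot>\<^sub>v u1" and Dtu1: "transpose_mat D *\<^sub>v u1 = s1 \<cdot>\<^sub>v w1"
    and Dw2: "D *\<^sub>v w2 = s2 \<cdot>\<^sub>v u2" and Dtu2: "transpose_mat D *\<^sub>v u2 = s2 \<cdot>\<^sub>v w2"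
    using a b unfolding singular_pair_def by auto
  have "s2 * (u1 \<bullet> u2) = u1 \<bullet> (D *\<^sub>v w2)" using u1 u2 Dw2 by simp
  also have "\<dots> = (transpose_mat D *\<^sub>v u1) \<bullet> w2"
    using transpose_vec_mult_scalar[OF D w2 u1] by simp
  also have "\<dots> = s1 * (w1 \<bullet> w2)" using w1 w2 Dtu1 by simp
  finally have uw: "s2 * (u1 \<bullet> u2) = s1 * (w1 \<bullet> w2)" .
  have "s2 * (w1 \<bullet> w2) = w1 \<bullet> (transpose_mat D *\<^sub>v u2)" using w1 w2 Dtu2 by simp
  also have "\<dots> = (transpose_mat (transpose_mat D) *\<^sub>v w1) \<bullet> u2"
    using transpose_vec_mult_scalar[OF Dt u2 w1] by simp
  also have "\<dots> = s1 * (u1 \<bullet> u2)" using u1 u2 Dw1 by simp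
  finally have wu: "s2 * (w1 \<bullet> w2) = s1 * (u1 \<bullet> u2)" .
  have "(s2\<^sup>2 - s1\<^sup>2) * (u1 \<bullet> u2) = 0"
    using uw wu by (simp add: power2_eq_square algebra_simps)
  moreover have "s2\<^sup>2 \<noteq> s1\<^sup>2" using s1 s2 ne by simp
  ultimately show ?thesis by simp
qed

lemma strict_antimono_below:
  fixes \<sigma> :: "nat \<Rightarrow> 'a::order"
  assumes dec: "\<forall>k. k + 1 < K \<longrightarrow> \<sigma> (k + 1) < \<sigma> k" and "a < b" "b < K"
  shows "\<sigma> b < \<sigma> a"
  using assms(2,3)
proof (induction b)
  case (Suc b)
  have "\<sigma> (Suc b) < \<sigma> b" using dec Suc.prems by simp
  then show ?case using Suc by (cases "a = b") auto
qed simp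

lemma singular_vectors_orthonormal:
  fixes D :: "real mat" and \<sigma> :: "nat \<Rightarrow> real" and u w :: "nat \<Rightarrow> real vec"
  assumes pos: "\<sigma> (K - 1) > 0" and dec: "\<forall>k. k + 1 < K \<longrightarrow> \<sigma> (k + 1) < \<sigma> k"
    and pairs: "\<forall>k<K. singular_pair D (\<sigma> k) (u k) (w k)"
  shows "\<forall>k<K. \<forall>l<K. u k \<bullet> u l = (if k = l then 1 else 0)"
proof (intro allI impI)
  fix k l assume k: "k < K" and l: "l < K"
  have \<sigma>_pos: "\<sigma> j > 0" if "j < K" for j
  proof (cases "j < K - 1")
    case True
    then show ?thesis using pos strict_antimono_below[OF dec True] by simp
  next
    case False
    then have "j = K - 1" using that by simp
    then show ?thesis using pos by simp
  qed
  show "u k \<bullet> u l = (if k = l then 1 else 0)"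
  proof (cases "k = l")
    case False
    then have "\<sigma> k \<noteq> \<sigma> l"
      using strict_antimono_below[OF dec, of k l] strict_antimono_below[OF dec, of l k] k l
      by (cases "k < l") auto
    then show ?thesis
      using singular_pair_orthogonal[of D "\<sigma> k" "u k" "w k" "\<sigma> l" "u l" "w l"]
        pairs \<sigma>_pos False k l by simp
  qed (use pairs k in \<open>simp add: singular_pair_def\<close>)
qed

lemma transpose_mult_self_orthonormal:
  fixes \<xi> :: "nat \<Rightarrow> real vec"
  assumes \<xi>_car: "\<forall>k<K. \<xi> k \<in> carrier_vec p"
    and orth: "\<forall>k<K. \<forall>l<K. \<xi> k \<bullet> \<xi> l = (if k = l then 1 else 0)"
  shows "transpose_mat (mat p K (\<lambda>(i, k). \<xi> k $ i)) * mat p K (\<lambda>(i, k). \<xi> k $ i) = 1\<^sub>m K"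
    (is "transpose_mat ?\<Xi> * ?\<Xi> = _")
proof (rule eq_matI)
  fix k l assume kl: "k < dim_row (1\<^sub>m K)" "l < dim_col (1\<^sub>m K)"
  have col: "col ?\<Xi> j = \<xi> j" if "j < K" for j
    using that \<xi>_car by (intro eq_vecI) auto
  have "(transpose_mat ?\<Xi> * ?\<Xi>) $$ (k, l) = col ?\<Xi> k \<bullet> col ?\<Xi> l" using kl by simp
  then show "(transpose_mat ?\<Xi> * ?\<Xi>) $$ (k, l) = 1\<^sub>m K $$ (k, l)"
    using kl col orth by simp
qed auto

lemma right_inverse_of_orthonormal_factor:
  fixes X A V :: "real mat"
  assumes "X \<in> carrier_mat p K" "A \<in> carrier_mat p K" "V \<in> carrier_mat K K"
    and XtX: "transpose_mat X * X = 1\<^sub>m K" and XAV: "X = A * V"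
  shows "V * (transpose_mat X * A) = 1\<^sub>m K"
proof -
  have XtA: "transpose_mat X * A \<in> carrier_mat K K" using assms(1,2) by simp
  have "(transpose_mat X * A) * V = transpose_mat X * X"
    unfolding XAV using assms(1,2,3) by (intro assoc_mult_mat) auto
  then show ?thesis using mat_mult_left_right_inverse[OF XtA assms(3)] XtX by simp
qed

lemma left_kernel_trivial_if_right_inverse:
  fixes V B :: "real mat"
  assumes V: "V \<in> carrier_mat K K" and B: "B \<in> carrier_mat K K" and VB: "V * B = 1\<^sub>m K"
    and kernel: "\<forall>k<K. (\<Sum>j<K. d j * V $$ (j, k)) = 0" and j: "j < K"
  shows "d j = 0"
proof -
  define dv where "dv = vec K d"
  have dv: "dv \<in> carrier_vec K" unfolding dv_def by simp
  have Vtdv: "transpose_mat V *\<^sub>v dv = 0\<^sub>v K"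
  proof (rule eq_vecI)
    fix k assume "k < dim_vec (0\<^sub>v K :: real vec)"
    then have k: "k < K" by simp
    have "(transpose_mat V *\<^sub>v dv) $ k = (\<Sum>j<K. d j * V $$ (j, k))"
      using k V by (simp add: dv_def scalar_prod_def lessThan_atLeast0 mult.commute)
    then show "(transpose_mat V *\<^sub>v dv) $ k = 0\<^sub>v K $ k" using kernel k by simp
  qed (use V in simp)
  have "dv = transpose_mat (V * B) *\<^sub>v dv" using VB dv by simp
  also have "\<dots> = (transpose_mat B * transpose_mat V) *\<^sub>v dv" using transpose_mult[OF V B] by simp
  also have "\<dots> = transpose_mat B *\<^sub>v (transpose_mat V *\<^sub>v dv)"
    using V B dv by (intro assoc_mult_mat_vec) auto
  also have "\<dots> = 0\<^sub>v K" using B by (auto simp: Vtdv)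
  finally show ?thesis using j by (metis dv_def index_vec index_zero_vec(1))
qed

lemma left_kernel_trivial_of_orthonormal_factor:
  fixes A V :: "real mat" and \<xi> :: "nat \<Rightarrow> real vec"
  assumes \<xi>_car: "\<forall>k<K. \<xi> k \<in> carrier_vec p"
    and orth: "\<forall>k<K. \<forall>l<K. \<xi> k \<bullet> \<xi> l = (if k = l then 1 else 0)"
    and A: "A \<in> carrier_mat p K" and V: "V \<in> carrier_mat K K"
    and factor: "mat p K (\<lambda>(i, k). \<xi> k $ i) = A * V"
    and kernel: "\<forall>k<K. (\<Sum>j<K. d j * V $$ (j, k)) = 0" and j: "j < K"
  shows "d j = 0"
proof -
  let ?\<Xi> = "mat p K (\<lambda>(i, k). \<xi> k $ i)"
  have \<Xi>: "?\<Xi> \<in> carrier_mat p K" by simp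
  have B: "transpose_mat ?\<Xi> * A \<in> carrier_mat K K"
    by (rule mult_carrier_mat[OF transpose_carrier_mat[THEN iffD2, OF \<Xi>] A])
  have "V * (transpose_mat ?\<Xi> * A) = 1\<^sub>m K"
    using transpose_mult_self_orthonormal[OF \<xi>_car orth]
    by (rule right_inverse_of_orthonormal_factor[OF \<Xi> A V _ factor])
  then show ?thesis using kernel j by (rule left_kernel_trivial_if_right_inverse[OF V B])
qed

lemma affinely_independent_ratio_rows:
  fixes V :: "real mat"
  assumes V1_pos: "\<forall>j<K. V $$ (j, 0) > 0"
    and rows_indep: "\<And>d j. \<forall>k<K. (\<Sum>j<K. d j * V $$ (j, k)) = 0 \<Longrightarrow> j < K \<Longrightarrow> d j = 0"
  shows "affinely_independent (K - 1) K
           (\<lambda>j. row (mat K (K - 1) (\<lambda>(j, k). V $$ (j, k + 1) / V $$ (j, 0))) j)"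
  unfolding affinely_independent_def
proof (intro allI impI)
  fix c :: "nat \<Rightarrow> real" and j
  assume h: "(\<Sum>j<K. c j) = 0 \<and> (\<forall>k<K - 1. (\<Sum>j<K.
               c j * row (mat K (K - 1) (\<lambda>(j, k). V $$ (j, k + 1) / V $$ (j, 0))) j $ k) = 0)"
    and j: "j < K"
  define d where "d j = c j / V $$ (j, 0)" for j
  have "\<forall>k<K. (\<Sum>j<K. d j * V $$ (j, k)) = 0"
  proof (intro allI impI)
    fix k assume k: "k < K"
    show "(\<Sum>j<K. d j * V $$ (j, k)) = 0"
    proof (cases k)
      case 0
      have "(\<Sum>j<K. d j * V $$ (j, k)) = (\<Sum>j<K. c j)"
        using 0 V1_pos by (intro sum.cong) (auto simp: d_def less_imp_neq[symmetric])
      then show ?thesis using h by simp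
    next
      case (Suc k')
      have "(\<Sum>j<K. d j * V $$ (j, k)) = (\<Sum>j<K.
              c j * row (mat K (K - 1) (\<lambda>(j, k). V $$ (j, k + 1) / V $$ (j, 0))) j $ k')"
        using Suc k by (intro sum.cong) (auto simp: d_def)
      then show ?thesis using h Suc k by simp
    qed
  qed
  then have "d j = 0" using j by (rule rows_indep)
  then show "c j = 0" using V1_pos j by (simp add: d_def less_imp_neq[symmetric])
qed

lemma ratio_rows_barycentric:
  fixes A V :: "real mat"
  assumes A: "A \<in> carrier_mat p K" and V: "V \<in> carrier_mat K K" and K: "K > 0"
    and A_nonneg: "\<forall>i<p. \<forall>j<K. A $$ (i, j) \<ge> 0" and V1_pos: "\<forall>j<K. V $$ (j, 0) > 0"
    and X_pos: "\<forall>i<p. (A * V) $$ (i, 0) > 0"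
  defines "Pm \<equiv> mat p K (\<lambda>(i, j). (1 / (A * V) $$ (i, 0)) * A $$ (i, j) * V $$ (j, 0))"
    and "Vs \<equiv> mat K (K - 1) (\<lambda>(j, k). V $$ (j, k + 1) / V $$ (j, 0))"
    and "R \<equiv> mat p (K - 1) (\<lambda>(i, k). (A * V) $$ (i, k + 1) / (A * V) $$ (i, 0))"
  shows "\<forall>i<p. weight_vector (row Pm i)
    \<and> (\<forall>j<K. Pm $$ (i, j) > 0 \<longleftrightarrow> A $$ (i, j) > 0)
    \<and> row R i = vec (K - 1) (\<lambda>k. \<Sum>j<K. Pm $$ (i, j) * row Vs j $ k)"
proof (intro allI impI)
  fix i assume i: "i < p"
  have X_pos_i: "(A * V) $$ (i, 0) > 0" and A_nonneg_i: "\<forall>j<K. A $$ (i, j) \<ge> 0"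
    using X_pos A_nonneg i by simp_all
  have AV: "(A * V) $$ (i, k) = (\<Sum>j<K. A $$ (i, j) * V $$ (j, k))" if "k < K" for k
    using i that A V by (simp add: scalar_prod_def lessThan_atLeast0)
  have Pm: "Pm $$ (i, j) = A $$ (i, j) * V $$ (j, 0) / (A * V) $$ (i, 0)" if "j < K" for j
    using i that by (simp add: Pm_def)
  have "(\<Sum>j<K. row Pm i $ j) = (\<Sum>j<K. A $$ (i, j) * V $$ (j, 0)) / (A * V) $$ (i, 0)"
    using Pm i by (simp add: Pm_def sum_divide_distrib)
  also have "\<dots> = 1" using AV[OF K] X_pos_i by simp
  finally have "weight_vector (row Pm i)"
    unfolding weight_vector_def using Pm i A_nonneg_i V1_pos X_pos_i
    by (auto simp: Pm_def less_imp_le)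
  moreover have "\<forall>j<K. Pm $$ (i, j) > 0 \<longleftrightarrow> A $$ (i, j) > 0"
    using Pm V1_pos X_pos_i by (auto simp: zero_less_divide_iff zero_less_mult_iff)
  moreover have "row R i = vec (K - 1) (\<lambda>k. \<Sum>j<K. Pm $$ (i, j) * row Vs j $ k)"
  proof (rule eq_vecI)
    fix k assume "k < dim_vec (vec (K - 1) (\<lambda>k. \<Sum>j<K. Pm $$ (i, j) * row Vs j $ k))"
    then have k: "k < K - 1" by simp
    have "(\<Sum>j<K. Pm $$ (i, j) * row Vs j $ k)
        = (\<Sum>j<K. A $$ (i, j) * V $$ (j, k + 1)) / (A * V) $$ (i, 0)"
      unfolding sum_divide_distrib using Pm k V1_pos
      by (intro sum.cong) (auto simp: Vs_def less_imp_neq[symmetric])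
    then show "row R i $ k = vec (K - 1) (\<lambda>k. \<Sum>j<K. Pm $$ (i, j) * row Vs j $ k) $ k"
      using AV[of "k + 1"] k i by (simp add: R_def)
  qed (simp add: R_def)
  ultimately show "weight_vector (row Pm i)
    \<and> (\<forall>j<K. Pm $$ (i, j) > 0 \<longleftrightarrow> A $$ (i, j) > 0)
    \<and> row R i = vec (K - 1) (\<lambda>k. \<Sum>j<K. Pm $$ (i, j) * row Vs j $ k)" by blast
qed

lemma barycentric_eq_vertex_iff:
  fixes v :: "nat \<Rightarrow> real vec"
  assumes aff: "affinely_independent d m v" and v: "\<forall>j<m. v j \<in> carrier_vec d"
    and k: "k < m" and w_sum: "(\<Sum>j<m. w j) = 1"
  shows "vec d (\<lambda>l. \<Sum>j<m. w j * v j $ l) = v k \<longleftrightarrow> (\<forall>j<m. w j = (if j = k then 1 else 0))"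
proof
  assume eq: "vec d (\<lambda>l. \<Sum>j<m. w j * v j $ l) = v k"
  define c where "c j = w j - (if j = k then 1 else 0)" for j
  have "(\<Sum>j<m. c j) = 0" using k w_sum by (simp add: c_def sum_subtractf)
  moreover have "\<forall>l<d. (\<Sum>j<m. c j * v j $ l) = 0"
  proof (intro allI impI)
    fix l assume l: "l < d"
    have "(\<Sum>j<m. c j * v j $ l) = (\<Sum>j<m. w j * v j $ l - (if j = k then v k $ l else 0))"
      by (intro sum.cong) (auto simp: c_def left_diff_distrib)
    also have "\<dots> = (\<Sum>j<m. w j * v j $ l) - (\<Sum>j<m. if j = k then v k $ l else 0)"
      by (rule sum_subtractf)
    also have "\<dots> = 0" using k l arg_cong[OF eq, of "\<lambda>x. x $ l"] by simp
    finally show "(\<Sum>j<m. c j * v j $ l) = 0" .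
  qed
  ultimately have "\<forall>j<m. c j = 0" using aff unfolding affinely_independent_def by blast
  then show "\<forall>j<m. w j = (if j = k then 1 else 0)" by (simp add: c_def)
next
  assume unit: "\<forall>j<m. w j = (if j = k then 1 else 0)"
  have "(\<Sum>j<m. w j * v j $ l) = (\<Sum>j<m. if j = k then v k $ l else 0)" for l
    using unit by (intro sum.cong) auto
  then have "(\<Sum>j<m. w j * v j $ l) = v k $ l" for l
    using k by simp
  then show "vec d (\<lambda>l. \<Sum>j<m. w j * v j $ l) = v k" using v k by (intro eq_vecI) auto
qed

lemma unit_weights_iff_anchor_word:
  fixes A :: "real mat" and w :: "nat \<Rightarrow> real"
  assumes A: "A \<in> carrier_mat p K" and k: "k < K"
    and A_nonneg: "\<forall>j<K. A $$ (i, j) \<ge> 0" and w_nonneg: "\<forall>j<K. w j \<ge> 0"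
    and w_sum: "(\<Sum>j<K. w j) = 1" and supp: "\<forall>j<K. w j > 0 \<longleftrightarrow> A $$ (i, j) > 0"
  shows "(\<forall>j<K. w j = (if j = k then 1 else 0)) \<longleftrightarrow> anchor_word A i k"
proof
  assume unit: "\<forall>j<K. w j = (if j = k then 1 else 0)"
  have "A $$ (i, l) = 0" if "l < K" "l \<noteq> k" for l
  proof -
    have "\<not> A $$ (i, l) > 0" using unit supp that by auto
    then show ?thesis using A_nonneg that by auto
  qed
  moreover have "A $$ (i, k) > 0" using unit supp k by auto
  ultimately show "anchor_word A i k" using A unfolding anchor_word_def by auto
next
  assume "anchor_word A i k"
  then have A0: "A $$ (i, j) = 0" if "j < K" "j \<noteq> k" for j
    using that A unfolding anchor_word_def by simp
  have w0: "w j = 0" if "j < K" "j \<noteq> k" for j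
  proof -
    have "\<not> w j > 0" using A0 supp that by auto
    then show ?thesis using w_nonneg that by auto
  qed
  have "(\<Sum>j<K. w j) = (\<Sum>j<K. if j = k then w k else 0)" using w0 by (intro sum.cong) auto
  then have "w k = 1" using k w_sum by simp
  then show "\<forall>j<K. w j = (if j = k then 1 else 0)" using w0 by simp
qed

lemma barycentric_vertex_iff_anchor_word:
  fixes A Pm R Vs :: "real mat"
  assumes A: "A \<in> carrier_mat p K" and A_nonneg: "\<forall>i<p. \<forall>j<K. A $$ (i, j) \<ge> 0"
    and Pm: "Pm \<in> carrier_mat p K" and Vs: "Vs \<in> carrier_mat K d"
    and aff: "affinely_independent d K (\<lambda>j. row Vs j)"
    and bary: "\<forall>i<p. weight_vector (row Pm i)
           \<and> (\<forall>j<K. Pm $$ (i, j) > 0 \<longleftrightarrow> A $$ (i, j) > 0)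
           \<and> row R i = vec d (\<lambda>l. \<Sum>j<K. Pm $$ (i, j) * row Vs j $ l)"
  shows "\<forall>i<p. \<forall>k<K. row R i = row Vs k \<longleftrightarrow> anchor_word A i k"
proof (intro allI impI)
  fix i k assume i: "i < p" and k: "k < K"
  have Pm_row: "\<forall>j<K. Pm $$ (i, j) \<ge> 0" "(\<Sum>j<K. Pm $$ (i, j)) = 1"
    using bary i Pm unfolding weight_vector_def by auto
  have Vs_rows: "\<forall>j<K. row Vs j \<in> carrier_vec d" using Vs by auto
  have "row R i = row Vs k \<longleftrightarrow> vec d (\<lambda>l. \<Sum>j<K. Pm $$ (i, j) * row Vs j $ l) = row Vs k"
    using bary i by simp
  also have "\<dots> \<longleftrightarrow> (\<forall>j<K. Pm $$ (i, j) = (if j = k then 1 else 0))"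
    by (rule barycentric_eq_vertex_iff[OF aff Vs_rows k Pm_row(2)])
  also have "\<dots> \<longleftrightarrow> anchor_word A i k"
    by (rule unit_weights_iff_anchor_word[OF A k]) (use A_nonneg i Pm_row bary in auto)
  finally show "row R i = row Vs k \<longleftrightarrow> anchor_word A i k" .
qed

theorem lemma2:
  fixes p K n :: nat and A W V :: "real mat"
    and \<sigma> :: "nat \<Rightarrow> real" and \<xi> \<eta> :: "nat \<Rightarrow> real vec"
    and \<Xi> R Vs Pm :: "real mat"
  assumes K2: "K \<ge> 2" and pK: "p \<ge> K" and nK: "n \<ge> K"
    and A_dim: "A \<in> carrier_mat p K"
    and A_nonneg: "\<forall>i<p. \<forall>k<K. A $$ (i, k) \<ge> 0"
    and A_cols: "\<forall>k<K. (\<Sum>i<p. A $$ (i, k)) = 1"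
    and W_dim: "W \<in> carrier_mat K n"
    and W_nonneg: "\<forall>k<K. \<forall>j<n. W $$ (k, j) \<ge> 0"
    and W_cols: "\<forall>j<n. (\<Sum>k<K. W $$ (k, j)) = 1"
    and rank: "vec_space.rank p (A * W) = K"
    and sv_pos: "\<sigma> (K - 1) > 0"
    and sv_decr: "\<forall>k. k + 1 < K \<longrightarrow> \<sigma> (k + 1) < \<sigma> k"
    and sv_pairs: "\<forall>k<K. singular_pair (A * W) (\<sigma> k) (\<xi> k) (\<eta> k)"
    and rows_nz: "\<forall>i<p. \<exists>k<K. A $$ (i, k) \<noteq> 0"
    and Xi_def: "\<Xi> = mat p K (\<lambda>(i, k). \<xi> k $ i)"
    and V_dim: "V \<in> carrier_mat K K"
    and Xi_AV: "\<Xi> = A * V"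
    and xi1_pos: "\<forall>i<p. \<xi> 0 $ i > 0"
    and V1_pos: "\<forall>j<K. V $$ (j, 0) > 0"
    and R_def: "R = mat p (K - 1) (\<lambda>(i, k). \<xi> (k + 1) $ i / \<xi> 0 $ i)"
    and Vs_def: "Vs = mat K (K - 1) (\<lambda>(j, k). V $$ (j, k + 1) / V $$ (j, 0))"
    and Pi_def: "Pm = mat p K (\<lambda>(i, j). (1 / \<xi> 0 $ i) * A $$ (i, j) * V $$ (j, 0))"
  shows "affinely_independent (K - 1) K (\<lambda>j. row Vs j)
    \<and> (\<forall>i<p. weight_vector (row Pm i)
           \<and> (\<forall>j<K. Pm $$ (i, j) > 0 \<longleftrightarrow> A $$ (i, j) > 0)
           \<and> row R i = vec (K - 1) (\<lambda>k. \<Sum>j<K. Pm $$ (i, j) * row Vs j $ k))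
    \<and> (\<forall>i<p. \<forall>k<K. row R i = row Vs k \<longleftrightarrow> anchor_word A i k)"
proof -
  have K: "K > 0" using K2 by simp
  have xi_car: "\<forall>k<K. \<xi> k \<in> carrier_vec p"
    using sv_pairs A_dim W_dim unfolding singular_pair_def by auto
  have "mat p K (\<lambda>(i, k). \<xi> k $ i) = A * V" using Xi_def Xi_AV by simp
  then have aff: "affinely_independent (K - 1) K (\<lambda>j. row Vs j)"
    unfolding Vs_def using singular_vectors_orthonormal[OF sv_pos sv_decr sv_pairs]
    by (intro affinely_independent_ratio_rows[OF V1_pos])
      (rule left_kernel_trivial_of_orthonormal_factor[OF xi_car _ A_dim V_dim])
  have xi_AV: "\<xi> k $ i = (A * V) $$ (i, k)" if "i < p" "k < K" for i k
    using that by (simp flip: Xi_AV add: Xi_def)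
  have "R = mat p (K - 1) (\<lambda>(i, k). (A * V) $$ (i, k + 1) / (A * V) $$ (i, 0))"
    and "Pm = mat p K (\<lambda>(i, j). (1 / (A * V) $$ (i, 0)) * A $$ (i, j) * V $$ (j, 0))"
    unfolding R_def Pi_def using xi_AV K by (auto intro!: eq_matI)
  moreover have "\<forall>i<p. (A * V) $$ (i, 0) > 0" using xi1_pos xi_AV K by simp
  ultimately have bary: "\<forall>i<p. weight_vector (row Pm i)
           \<and> (\<forall>j<K. Pm $$ (i, j) > 0 \<longleftrightarrow> A $$ (i, j) > 0)
           \<and> row R i = vec (K - 1) (\<lambda>k. \<Sum>j<K. Pm $$ (i, j) * row Vs j $ k)"
    unfolding Vs_def using ratio_rows_barycentric[OF A_dim V_dim K A_nonneg V1_pos] by simp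
  moreover have "Pm \<in> carrier_mat p K" "Vs \<in> carrier_mat K (K - 1)"
    using Pi_def Vs_def by simp_all
  ultimately show ?thesis
    using aff barycentric_vertex_iff_anchor_word[OF A_dim A_nonneg _ _ aff] by blast
qed

end
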